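(* Let ${\bm X}={\bm Y}$ be a finite set, let $m^{\bm X}_\bullet,m^{\bm Y}_\bullet$ be irreducible and aperiodic Markov transition kernels on it, and let the cost matrix $C$ be a pseudometric on ${\bm X}$. Define $C^{(0)}=C$ and $C^{(l)}_{ij}=d_{\mathrm W}(m^{\bm X}_i,m^{\bm Y}_j;C^{(l-1)})$ for $l\ge1$. Then $(C^{(k)})_{k\in\mathbb{N}}$ converges to a constant matrix.
   Context: For probability measures $\alpha,\beta$ on finite sets and cost $D$, $d_{\mathrm W}(\alpha,\beta;D)=\inf_{(X,Y)\in\mathcal{C}(\alpha,\beta)}\mathbb{E}\,D(X,Y)$, where $\mathcal{C}(\alpha,\beta)$ is the set of couplings of $\alpha,\beta$. $m^{\bm X}_i$ denotes the transition distribution from state $i$. *)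

theory Defs
  imports "HOL-Probability.Probability"
begin

definition couplings :: "'a pmf \<Rightarrow> 'b pmf \<Rightarrow> ('a \<times> 'b) pmf set" where
  "couplings \<alpha> \<beta> = {\<gamma>. map_pmf fst \<gamma> = \<alpha> \<and> map_pmf snd \<gamma> = \<beta>}"

definition wasserstein :: "'a pmf \<Rightarrow> 'b pmf \<Rightarrow> ('a \<Rightarrow> 'b \<Rightarrow> real) \<Rightarrow> real" where
  "wasserstein \<alpha> \<beta> D =
     (INF \<gamma> \<in> couplings \<alpha> \<beta>. measure_pmf.expectation \<gamma> (\<lambda>(x, y). D x y))"

primrec kstep :: "('a \<Rightarrow> 'a pmf) \<Rightarrow> nat \<Rightarrow> 'a \<Rightarrow> 'a pmf" where
  "kstep m 0 i = return_pmf i"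
| "kstep m (Suc n) i = bind_pmf (kstep m n i) m"

definition irreducible_kernel :: "('a \<Rightarrow> 'a pmf) \<Rightarrow> bool" where
  "irreducible_kernel m \<longleftrightarrow> (\<forall>i j. \<exists>n. pmf (kstep m n i) j > 0)"

definition period :: "('a \<Rightarrow> 'a pmf) \<Rightarrow> 'a \<Rightarrow> nat" where
  "period m i = Gcd {n. n > 0 \<and> pmf (kstep m n i) i > 0}"

definition aperiodic_kernel :: "('a \<Rightarrow> 'a pmf) \<Rightarrow> bool" where
  "aperiodic_kernel m \<longleftrightarrow> (\<forall>i. period m i = 1)"

definition pseudometric :: "('a \<Rightarrow> 'a \<Rightarrow> real) \<Rightarrow> bool" where
  "pseudometric C \<longleftrightarrow> (\<forall>x. C x x = 0) \<and> (\<forall>x y. C x y = C y x)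
     \<and> (\<forall>x y z. C x z \<le> C x y + C y z)"

primrec cost_iter :: "('a \<Rightarrow> 'a pmf) \<Rightarrow> ('a \<Rightarrow> 'a pmf) \<Rightarrow> ('a \<Rightarrow> 'a \<Rightarrow> real) \<Rightarrow> nat \<Rightarrow> 'a \<Rightarrow> 'a \<Rightarrow> real" where
  "cost_iter mX mY C 0 = C"
| "cost_iter mX mY C (Suc l) = (\<lambda>i j. wasserstein (mX i) (mY j) (cost_iter mX mY C l))"

end

theory Submission
  imports Defs
begin

text \<open>
  The step from C^(l) to C^(l+1) averages C^(l) against couplings, so the minimum of C^(l)
  is nondecreasing and its maximum nonincreasing in l. Irreducibility and aperiodicity make the
  N-step kernels strictly positive for some N (a set of positive integers closed under addition
  and with gcd 1 contains all large integers), so the independent coupling of the N-step laws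
  puts mass at least some \<eta> > 0 on a minimiser of C^(l). Bounding C^(l+N) by that coupling
  shows that the oscillation max - min shrinks by the factor 1 - \<eta> every N steps, so
  maximum and minimum have a common limit.
\<close>

lemma mult_mem_add_closed:
  fixes S :: "nat set"
  assumes "0 \<in> S" and "\<And>a b. a \<in> S \<Longrightarrow> b \<in> S \<Longrightarrow> a + b \<in> S" and "a \<in> S"
  shows "k * a \<in> S"
  by (induction k) (simp_all add: assms)

lemma add_closed_Gcd_eq_1_consecutive:
  fixes S :: "nat set"
  assumes zero: "0 \<in> S" and add: "\<And>a b. a \<in> S \<Longrightarrow> b \<in> S \<Longrightarrow> a + b \<in> S"
    and Gcd: "Gcd S = 1"
  shows "\<exists>b. b \<in> S \<and> Suc b \<in> S"
proof -
  note mult = mult_mem_add_closed[OF zero add]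
  define T where "T = {t. t > 0 \<and> (\<exists>b\<in>S. b + t \<in> S)}"
  obtain s where "s \<in> S" "s > 0"
    using Gcd by (metis Gcd_0_iff gr0I insertI1 subsetI zero_neq_one)
  then have "s \<in> T" unfolding T_def using zero by force
  define d where "d = Least (\<lambda>t. t \<in> T)"
  have "d \<in> T" unfolding d_def by (rule LeastI) fact
  then obtain b where d_pos: "d > 0" and b: "b \<in> S" "b + d \<in> S" unfolding T_def by blast
  txt \<open>The least positive gap \<open>d\<close> divides every element:
    by Bezout, \<open>gcd s d\<close> is a gap too.\<close>
  have "d dvd s" if "s \<in> S" for s
  proof (cases "s = 0")
    case False
    then obtain x y where xy: "s * x = d * y + gcd s d" using bezout_nat by blast
    have "(b + d) * y + gcd s d = s * x + b * y" using xy by (simp add: algebra_simps)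
    moreover have "(b + d) * y \<in> S" "s * x + b * y \<in> S"
      using mult add b \<open>s \<in> S\<close> by (metis mult.commute)+
    ultimately have "gcd s d \<in> T"
      unfolding T_def using d_pos by (auto intro!: bexI[of _ "(b + d) * y"])
    then have "d \<le> gcd s d" unfolding d_def by (rule Least_le)
    then have "gcd s d = d" using d_pos by (simp add: le_antisym)
    then show ?thesis by (metis gcd_dvd1)
  qed simp
  then have "d = 1" using Gcd by (metis Gcd_greatest nat_dvd_1_iff_1)
  then show ?thesis using b by auto
qed

lemma add_closed_consecutive_ge_square:
  fixes S :: "nat set"
  assumes zero: "0 \<in> S" and add: "\<And>a b. a \<in> S \<Longrightarrow> b \<in> S \<Longrightarrow> a + b \<in> S"
    and b: "b \<in> S" "Suc b \<in> S" and n: "b * b \<le> n"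
  shows "n \<in> S"
proof (cases "b = 0")
  case True
  then show ?thesis using mult_mem_add_closed[OF zero add b(2), of n] by simp
next
  case False
  define q r where "q = n div b" and "r = n mod b"
  have "r < b" using False unfolding r_def by simp
  moreover have "b \<le> q" using div_le_mono[OF n, of b] False unfolding q_def by simp
  ultimately have "n = (q - r) * b + r * Suc b"
    unfolding q_def r_def by (simp add: algebra_simps diff_mult_distrib)
  then show ?thesis using mult_mem_add_closed[OF zero add] add b by metis
qed

lemma eventually_mem_add_closed_Gcd_eq_1:
  fixes S :: "nat set"
  assumes add: "\<And>a b. a \<in> S \<Longrightarrow> b \<in> S \<Longrightarrow> a + b \<in> S" and "Gcd S = 1"
  shows "\<forall>\<^sub>F n in sequentially. n \<in> S"
proof -
  have add0: "a + b \<in> insert 0 S" if "a \<in> insert 0 S" "b \<in> insert 0 S" for a b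
    using that add by auto
  obtain b where b: "b \<in> insert 0 S" "Suc b \<in> insert 0 S"
    using add_closed_Gcd_eq_1_consecutive[OF _ add0] \<open>Gcd S = 1\<close> by auto
  have "n \<in> S" if "Suc (b * b) \<le> n" for n
    using add_closed_consecutive_ge_square[OF _ add0 b, of n] that by auto
  then show ?thesis unfolding eventually_sequentially by blast
qed

lemma kstep_add: "kstep m (a + b) i = bind_pmf (kstep m a i) (kstep m b)"
  by (induction b) (simp_all add: bind_return_pmf' bind_assoc_pmf)

lemma kstep_Suc_left: "kstep m (Suc n) i = bind_pmf (m i) (kstep m n)"
  using kstep_add[of m 1 n i] by (simp add: bind_return_pmf)

lemma pmf_kstep_add_pos:
  assumes "pmf (kstep m a i) x > 0" and "pmf (kstep m b x) y > 0"
  shows "pmf (kstep m (a + b) i) y > 0"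
  using assms by (auto simp: kstep_add pmf_positive_iff simp del: kstep.simps)

lemma eventually_kstep_pos:
  fixes m :: "'a::finite \<Rightarrow> 'a pmf"
  assumes irr: "irreducible_kernel m" and ap: "aperiodic_kernel m"
  shows "\<forall>\<^sub>F n in sequentially. \<forall>i j. pmf (kstep m n i) j > 0"
proof (intro eventually_all_finite)
  fix i j
  obtain d where d: "pmf (kstep m d i) j > 0"
    using irr unfolding irreducible_kernel_def by blast
  have "\<forall>\<^sub>F n in sequentially. n \<in> {n. n > 0 \<and> pmf (kstep m n i) i > 0}"
  proof (rule eventually_mem_add_closed_Gcd_eq_1)
    show "Gcd {n. n > 0 \<and> pmf (kstep m n i) i > 0} = 1"
      using ap unfolding aperiodic_kernel_def period_def by blast
  qed (auto intro: pmf_kstep_add_pos)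
  then have "\<forall>\<^sub>F n in sequentially. pmf (kstep m (n + d) i) j > 0"
    by (rule eventually_mono) (auto intro: pmf_kstep_add_pos[OF _ d])
  then show "\<forall>\<^sub>F n in sequentially. pmf (kstep m n i) j > 0"
    by (rule eventually_sequentially_seg[THEN iffD1])
qed

lemma expectation_ge_Min:
  fixes f :: "'b::finite \<Rightarrow> real"
  shows "Min (range f) \<le> measure_pmf.expectation p f"
  by (rule measure_pmf.integral_ge_const) (auto intro: integrable_measure_pmf_finite)

lemma expectation_le_Max:
  fixes f :: "'b::finite \<Rightarrow> real"
  shows "measure_pmf.expectation p f \<le> Max (range f)"
  by (rule measure_pmf.integral_le_const) (auto intro: integrable_measure_pmf_finite)

lemma expectation_mono_finite:
  fixes f g :: "'b::finite \<Rightarrow> real"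
  assumes "\<And>x. f x \<le> g x"
  shows "measure_pmf.expectation p f \<le> measure_pmf.expectation p g"
  by (rule integral_mono) (auto intro: integrable_measure_pmf_finite assms)

lemma expectation_bind_pmf:
  fixes f :: "'b::finite \<Rightarrow> real"
  shows "measure_pmf.expectation (bind_pmf M N) f
           = measure_pmf.expectation M (\<lambda>x. measure_pmf.expectation (N x) f)"
  unfolding measure_pmf_bind
  by (rule integral_bind[where K="count_space UNIV" and B="Max (range (\<lambda>x. \<bar>f x\<bar>))" and B'=1])
     (auto intro: Max_ge measure_pmf.subprob_measure_le_1
       simp: measure_pmf.emeasure_space_1 measure_pmf_in_subprob_algebra)

definition osc :: "('b::finite \<Rightarrow> real) \<Rightarrow> real" where
  "osc f = Max (range f) - Min (range f)"

lemma expectation_le_Min_add_osc: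
  fixes f :: "'b::finite \<Rightarrow> real"
  assumes mass: "\<And>z. \<eta> \<le> pmf p z"
  shows "measure_pmf.expectation p f \<le> Min (range f) + (1 - \<eta>) * osc f"
proof -
  have "Min (range f) \<in> range f" by (rule Min_in) auto
  then obtain z where z: "f z = Min (range f)" by (metis rangeE)
  have "f x \<le> Min (range f) + osc f * (1 - indicator {z} x)" for x
    using z by (auto simp: osc_def split: split_indicator)
  then have "measure_pmf.expectation p f
      \<le> measure_pmf.expectation p (\<lambda>x. Min (range f) + osc f * (1 - indicator {z} x))"
    by (rule expectation_mono_finite)
  also have "\<dots> = Min (range f) + osc f * (1 - pmf p z)"
    by (simp add: integrable_measure_pmf_finite measure_pmf_single)
  also have "\<dots> \<le> Min (range f) + (1 - \<eta>) * osc f"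
    using mass[of z] by (simp add: osc_def mult.commute mult_right_mono)
  finally show ?thesis .
qed

lemma pair_pmf_in_couplings: "pair_pmf p q \<in> couplings p q"
  unfolding couplings_def by (simp add: map_fst_pair_pmf map_snd_pair_pmf)

lemma wasserstein_ge_Min:
  fixes p :: "'a::finite pmf" and q :: "'b::finite pmf"
  shows "Min (range (case_prod D)) \<le> wasserstein p q D"
  unfolding wasserstein_def
  using pair_pmf_in_couplings by (blast intro: cINF_greatest expectation_ge_Min)

lemma wasserstein_le_expectation:
  fixes p :: "'a::finite pmf" and q :: "'b::finite pmf"
  assumes "\<gamma> \<in> couplings p q"
  shows "wasserstein p q D \<le> measure_pmf.expectation \<gamma> (case_prod D)"
  unfolding wasserstein_def
  by (rule cINF_lower[OF bdd_belowI2 assms]) (rule expectation_ge_Min)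

lemma pair_pmf_bind_bind:
  "pair_pmf (bind_pmf p f) (bind_pmf q g) = bind_pmf (pair_pmf p q) (\<lambda>(x, y). pair_pmf (f x) (g y))"
  unfolding pair_pmf_def by (simp add: bind_assoc_pmf bind_return_pmf) (subst bind_commute_pmf, rule refl)

lemma cost_iter_add_le_expectation:
  fixes mX mY :: "'a::finite \<Rightarrow> 'a pmf"
  shows "cost_iter mX mY C (l + n) i j
    \<le> measure_pmf.expectation (pair_pmf (kstep mX n i) (kstep mY n j)) (case_prod (cost_iter mX mY C l))"
proof (induction n arbitrary: i j)
  case 0
  then show ?case by (simp add: pair_return_pmf)
next
  case (Suc n)
  let ?E = "\<lambda>\<gamma>. measure_pmf.expectation \<gamma> (case_prod (cost_iter mX mY C l))"
  have "cost_iter mX mY C (l + Suc n) i j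
      \<le> measure_pmf.expectation (pair_pmf (mX i) (mY j)) (case_prod (cost_iter mX mY C (l + n)))"
    by (simp add: wasserstein_le_expectation pair_pmf_in_couplings)
  also have "\<dots> \<le> measure_pmf.expectation (pair_pmf (mX i) (mY j))
                    (\<lambda>(x, y). ?E (pair_pmf (kstep mX n x) (kstep mY n y)))"
    by (rule expectation_mono_finite) (auto simp: Suc)
  also have "\<dots> = ?E (pair_pmf (kstep mX (Suc n) i) (kstep mY (Suc n) j))"
    by (simp only: kstep_Suc_left pair_pmf_bind_bind expectation_bind_pmf case_prod_beta')
  finally show ?case .
qed

lemma incseq_Min_cost_iter:
  fixes mX mY :: "'a::finite \<Rightarrow> 'a pmf"
  shows "incseq (\<lambda>l. Min (range (case_prod (cost_iter mX mY C l))))"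
proof (rule incseq_SucI)
  fix l
  show "Min (range (case_prod (cost_iter mX mY C l)))
      \<le> Min (range (case_prod (cost_iter mX mY C (Suc l))))"
    by (simp add: wasserstein_ge_Min)
qed

lemma decseq_Max_cost_iter:
  fixes mX mY :: "'a::finite \<Rightarrow> 'a pmf"
  shows "decseq (\<lambda>l. Max (range (case_prod (cost_iter mX mY C l))))"
proof (rule decseq_SucI)
  fix l
  have "wasserstein (mX i) (mY j) (cost_iter mX mY C l) \<le> Max (range (case_prod (cost_iter mX mY C l)))"
    for i j
    using wasserstein_le_expectation[OF pair_pmf_in_couplings] expectation_le_Max order_trans by blast
  then show "Max (range (case_prod (cost_iter mX mY C (Suc l))))
      \<le> Max (range (case_prod (cost_iter mX mY C l)))"
    by auto
qed

lemma osc_cost_iter_add_le: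
  fixes mX mY :: "'a::finite \<Rightarrow> 'a pmf"
  assumes mass: "\<And>i j w. \<eta> \<le> pmf (pair_pmf (kstep mX N i) (kstep mY N j)) w"
  shows "osc (case_prod (cost_iter mX mY C (l + N)))
           \<le> (1 - \<eta>) * osc (case_prod (cost_iter mX mY C l))"
proof -
  let ?D = "\<lambda>l. case_prod (cost_iter mX mY C l)"
  have "cost_iter mX mY C (l + N) i j \<le> Min (range (?D l)) + (1 - \<eta>) * osc (?D l)" for i j
    using cost_iter_add_le_expectation expectation_le_Min_add_osc[OF mass] order_trans by blast
  then have "Max (range (?D (l + N))) \<le> Min (range (?D l)) + (1 - \<eta>) * osc (?D l)"
    by auto
  moreover have "Min (range (?D l)) \<le> Min (range (?D (l + N)))"
    using incseq_Min_cost_iter by (rule incseqD) simp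
  ultimately show ?thesis unfolding osc_def by linarith
qed

lemma incseq_decseq_common_limit:
  fixes L H :: "nat \<Rightarrow> real"
  assumes L: "incseq L" and H: "decseq H" and LH: "\<And>l. L l \<le> H l"
    and gap: "\<And>l. H (l + N) - L (l + N) \<le> q * (H l - L l)" and "q < 1"
  shows "\<exists>c. L \<longlonglongrightarrow> c \<and> H \<longlonglongrightarrow> c"
proof -
  have "L l \<le> H 0" "L 0 \<le> H l" for l
    using LH[of l] incseqD[OF L, of 0 l] decseqD[OF H, of 0 l] by simp_all
  then obtain a b where a: "L \<longlonglongrightarrow> a" and b: "H \<longlonglongrightarrow> b"
    using incseq_convergent[OF L] decseq_convergent[OF H] by metis
  have "(\<lambda>l. H (l + N) - L (l + N)) \<longlonglongrightarrow> b - a"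
    using LIMSEQ_ignore_initial_segment[OF a] LIMSEQ_ignore_initial_segment[OF b] by (intro tendsto_diff)
  moreover have "(\<lambda>l. q * (H l - L l)) \<longlonglongrightarrow> q * (b - a)"
    by (intro tendsto_intros a b)
  ultimately have "b - a \<le> q * (b - a)"
    by (rule LIMSEQ_le) (use gap in blast)
  moreover have "a \<le> b"
    using a b by (rule LIMSEQ_le) (use LH in blast)
  ultimately have "a = b"
    using \<open>q < 1\<close> by (smt (verit) mult_le_cancel_right1)
  then show ?thesis using a b by blast
qed

lemma uniform_mass_pair_kstep:
  fixes mX mY :: "'a::finite \<Rightarrow> 'a pmf"
  assumes "irreducible_kernel mX" and "aperiodic_kernel mX"
    and "irreducible_kernel mY" and "aperiodic_kernel mY"
  obtains N \<eta> where "\<eta> > 0" and "\<And>i j w. \<eta> \<le> pmf (pair_pmf (kstep mX N i) (kstep mY N j)) w"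
proof -
  obtain N where "\<forall>i j. pmf (kstep mX N i) j > 0" "\<forall>i j. pmf (kstep mY N i) j > 0"
    using eventually_conj[OF eventually_kstep_pos[OF assms(1,2)] eventually_kstep_pos[OF assms(3,4)]]
    unfolding eventually_sequentially by blast
  then have pos: "pmf (pair_pmf (kstep mX N i) (kstep mY N j)) w > 0" for i j w
    by (cases w) (simp add: pmf_pair)
  define \<eta> where "\<eta> = Min (range (\<lambda>(i, j, w). pmf (pair_pmf (kstep mX N i) (kstep mY N j)) w))"
  have "\<eta> > 0"
    unfolding \<eta>_def using pos by (subst Min_gr_iff) auto
  moreover have "\<eta> \<le> pmf (pair_pmf (kstep mX N i) (kstep mY N j)) w" for i j w
    unfolding \<eta>_def by (rule Min_le) (auto intro: rev_image_eqI[of "(i, j, w)"])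
  ultimately show ?thesis by (rule that)
qed

theorem proposition26:
  fixes mX mY :: "'a::finite \<Rightarrow> 'a pmf" and C :: "'a \<Rightarrow> 'a \<Rightarrow> real"
  assumes "irreducible_kernel mX" and "aperiodic_kernel mX"
    and "irreducible_kernel mY" and "aperiodic_kernel mY"
    and "pseudometric C"
  shows "\<exists>c::real. \<forall>i j. (\<lambda>k. cost_iter mX mY C k i j) \<longlonglongrightarrow> c"
proof -
  let ?D = "\<lambda>l. case_prod (cost_iter mX mY C l)"
  obtain N \<eta> where "\<eta> > 0"
    and mass: "\<And>i j w. \<eta> \<le> pmf (pair_pmf (kstep mX N i) (kstep mY N j)) w"
    using uniform_mass_pair_kstep[OF assms(1-4)] by metis
  from mass have "osc (?D (l + N)) \<le> (1 - \<eta>) * osc (?D l)" for l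
    by (rule osc_cost_iter_add_le)
  then have "\<exists>c. (\<lambda>l. Min (range (?D l))) \<longlonglongrightarrow> c
                \<and> (\<lambda>l. Max (range (?D l))) \<longlonglongrightarrow> c"
    using \<open>\<eta> > 0\<close>
    by (intro incseq_decseq_common_limit[where q="1 - \<eta>" and N=N] incseq_Min_cost_iter
        decseq_Max_cost_iter) (auto simp: osc_def Min_le_iff)
  then obtain c where Min: "(\<lambda>l. Min (range (?D l))) \<longlonglongrightarrow> c"
    and Max: "(\<lambda>l. Max (range (?D l))) \<longlonglongrightarrow> c" by blast
  have "Min (range (?D l)) \<le> cost_iter mX mY C l i j"
    and "cost_iter mX mY C l i j \<le> Max (range (?D l))" for l i j
    by (auto intro!: Min_le Max_ge rev_image_eqI[of "(i, j)"])
  then have "(\<lambda>k. cost_iter mX mY C k i j) \<longlonglongrightarrow> c" for i j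
    by (intro tendsto_sandwich[OF _ _ Min Max]) simp_all
  then show ?thesis by blast
qed

end
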